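(* If $G \ne K_4$ is a connected, claw-free, cubic graph of order $n$, then (a) $\frac{1}{3}n \le \alpha(G) \le \frac{2}{5}n$, and (b) $\frac{3}{5}n \le m(G,3) \le \frac{2}{3}n$.
   Context: A graph is claw-free if it has no induced subgraph isomorphic to $K_{1,3}$; it is cubic if every vertex has degree $3$. $\alpha(G)$ is the independence number. $3$-percolation: starting from a set $S$ of infected vertices, repeatedly infect any uninfected vertex having at least $3$ infected neighbors; $S$ is $3$-percolating if eventually all vertices are infected, and $m(G,3)$ is the minimum cardinality of a $3$-percolating set of $G$. *)

theory Defs
  imports Complex_Main
begin

definition graph :: "'a set \<Rightarrow> ('a \<Rightarrow> 'a \<Rightarrow> bool) \<Rightarrow> bool" where
  "graph V E \<longleftrightarrow> finite V \<and> (\<forall>u v. E u v \<longrightarrow> u \<in> V \<and> v \<in> V)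
     \<and> (\<forall>u v. E u v \<longrightarrow> E v u) \<and> (\<forall>v. \<not> E v v)"

definition nbrs :: "'a set \<Rightarrow> ('a \<Rightarrow> 'a \<Rightarrow> bool) \<Rightarrow> 'a \<Rightarrow> 'a set" where
  "nbrs V E v = {u \<in> V. E v u}"

definition cubic :: "'a set \<Rightarrow> ('a \<Rightarrow> 'a \<Rightarrow> bool) \<Rightarrow> bool" where
  "cubic V E \<longleftrightarrow> (\<forall>v\<in>V. card (nbrs V E v) = 3)"

definition connected_graph :: "'a set \<Rightarrow> ('a \<Rightarrow> 'a \<Rightarrow> bool) \<Rightarrow> bool" where
  "connected_graph V E \<longleftrightarrow> V \<noteq> {} \<and>
     (\<forall>u\<in>V. \<forall>v\<in>V. (\<lambda>x y. E x y)\<^sup>*\<^sup>* u v)"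

definition claw_free :: "'a set \<Rightarrow> ('a \<Rightarrow> 'a \<Rightarrow> bool) \<Rightarrow> bool" where
  "claw_free V E \<longleftrightarrow> \<not> (\<exists>c\<in>V. \<exists>x\<in>V. \<exists>y\<in>V. \<exists>z\<in>V.
     E c x \<and> E c y \<and> E c z \<and> x \<noteq> y \<and> x \<noteq> z \<and> y \<noteq> z \<and>
     \<not> E x y \<and> \<not> E x z \<and> \<not> E y z)"

definition is_K4 :: "'a set \<Rightarrow> ('a \<Rightarrow> 'a \<Rightarrow> bool) \<Rightarrow> bool" where
  "is_K4 V E \<longleftrightarrow> card V = 4 \<and> (\<forall>u\<in>V. \<forall>v\<in>V. u \<noteq> v \<longrightarrow> E u v)"

definition independent_set :: "'a set \<Rightarrow> ('a \<Rightarrow> 'a \<Rightarrow> bool) \<Rightarrow> 'a set \<Rightarrow> bool" where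
  "independent_set V E I \<longleftrightarrow> I \<subseteq> V \<and> (\<forall>u\<in>I. \<forall>v\<in>I. \<not> E u v)"

definition independence_number :: "'a set \<Rightarrow> ('a \<Rightarrow> 'a \<Rightarrow> bool) \<Rightarrow> nat" where
  "independence_number V E = Max (card ` {I. independent_set V E I})"

text \<open>r-percolation: the set of eventually infected vertices starting from S
  (a vertex becomes infected once some r of its neighbours, a finite set T, are infected).\<close>
inductive_set infected :: "'a set \<Rightarrow> ('a \<Rightarrow> 'a \<Rightarrow> bool) \<Rightarrow> nat \<Rightarrow> 'a set \<Rightarrow> 'a set"
  for V E r S where
  init: "v \<in> S \<Longrightarrow> v \<in> infected V E r S"
| step: "v \<in> V \<Longrightarrow> T \<subseteq> nbrs V E v \<Longrightarrow> finite T \<Longrightarrow> card T \<ge> r \<Longrightarrow>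
      (\<And>u. u \<in> T \<Longrightarrow> u \<in> infected V E r S) \<Longrightarrow> v \<in> infected V E r S"

definition percolating :: "'a set \<Rightarrow> ('a \<Rightarrow> 'a \<Rightarrow> bool) \<Rightarrow> nat \<Rightarrow> 'a set \<Rightarrow> bool" where
  "percolating V E r S \<longleftrightarrow> S \<subseteq> V \<and> V \<subseteq> infected V E r S"

definition min_percolating :: "'a set \<Rightarrow> ('a \<Rightarrow> 'a \<Rightarrow> bool) \<Rightarrow> nat \<Rightarrow> nat" where
  "min_percolating V E r = Min (card ` {S. percolating V E r S})"

end

theory Submission
  imports Defs
begin

text \<open>In a cubic graph a vertex outside the initial set \<open>S\<close> becomes infected only when all three
  of its neighbours are infected, so the 3-percolating sets are exactly the complements of
  independent sets and \<open>m(G,3) = n - \<alpha>(G)\<close>; part (b) is thus part (a).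

  The bound \<open>\<alpha>(G) \<le> 2n/5\<close> is double counting: every vertex of an independent set \<open>I\<close> has three
  neighbours outside \<open>I\<close>, and by claw-freeness every vertex outside \<open>I\<close> has at most two neighbours
  in \<open>I\<close>.

  The bound \<open>\<alpha>(G) \<ge> n/3\<close> is proved by induction on \<open>n\<close> for the larger class of claw-free,
  \<open>K\<^sub>4\<close>-free graphs of maximum degree at most 3 (\<open>G\<close> is \<open>K\<^sub>4\<close>-free, being connected, cubic and
  not \<open>K\<^sub>4\<close>). An independent set \<open>J\<close> whose closed neighbourhood has at most \<open>3|J|\<close> vertices
  can be split off: a vertex of degree at most 2, or two non-adjacent vertices with two common
  neighbours. Otherwise the graph is cubic, each vertex \<open>v\<close> lies in a triangle \<open>vxy\<close>, and deleting
  the triangle while joining the third neighbours \<open>v'\<close> of \<open>v\<close> and \<open>x'\<close> of \<open>x\<close> gives a smaller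
  graph of the class; an independent set of it extends by \<open>v\<close> or by \<open>x\<close>.\<close>

lemma graph_finite: "graph V E \<Longrightarrow> finite V"
  unfolding graph_def by simp

lemma graph_sym: "graph V E \<Longrightarrow> E u v \<Longrightarrow> E v u"
  unfolding graph_def by blast

lemma graph_irrefl: "graph V E \<Longrightarrow> \<not> E v v"
  unfolding graph_def by blast

lemma graph_edge_in: "graph V E \<Longrightarrow> E u v \<Longrightarrow> u \<in> V \<and> v \<in> V"
  unfolding graph_def by blast

lemma nbrs_subset: "nbrs V E v \<subseteq> V"
  unfolding nbrs_def by blast

lemma finite_nbrs: "graph V E \<Longrightarrow> finite (nbrs V E v)"
  using graph_finite nbrs_subset finite_subset by metis

lemma mem_nbrs_iff: "graph V E \<Longrightarrow> u \<in> nbrs V E v \<longleftrightarrow> E v u"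
  unfolding graph_def nbrs_def by auto

lemma claw_freeD:
  assumes "claw_free V E" "c \<in> V" "x \<in> V" "y \<in> V" "z \<in> V" "E c x" "E c y" "E c z"
    "x \<noteq> y" "x \<noteq> z" "y \<noteq> z"
  shows "E x y \<or> E x z \<or> E y z"
  using assms unfolding claw_free_def by blast

lemma independent_set_subset: "independent_set V E I \<Longrightarrow> I \<subseteq> V"
  unfolding independent_set_def by blast

lemma finite_independent_sets:
  assumes "graph V E"
  shows "finite {I. independent_set V E I}"
proof (rule finite_subset)
  show "{I. independent_set V E I} \<subseteq> Pow V"
    unfolding independent_set_def by blast
qed (simp add: graph_finite[OF assms])

lemma card_le_independence_number:
  "graph V E \<Longrightarrow> independent_set V E I \<Longrightarrow> card I \<le> independence_number V E"
  unfolding independence_number_def by (simp add: finite_independent_sets)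

lemma independence_number_attained:
  assumes "graph V E"
  obtains I where "independent_set V E I" "card I = independence_number V E"
proof -
  have "independent_set V E {}"
    by (simp add: independent_set_def)
  then have "independence_number V E \<in> card ` {I. independent_set V E I}"
    unfolding independence_number_def using finite_independent_sets[OF assms] by (intro Max_in) auto
  then show thesis
    using that by auto
qed

lemma card_nbrs_Int_independent_set_le_2:
  assumes g: "graph V E" and cf: "claw_free V E" and I: "independent_set V E I" and u: "u \<in> V"
  shows "card (nbrs V E u \<inter> I) \<le> 2"
proof (rule ccontr)
  assume "\<not> ?thesis"
  then have "3 \<le> card (nbrs V E u \<inter> I)"
    by simp
  then obtain A where "A \<subseteq> nbrs V E u \<inter> I" "card A = 3"
    by (rule obtain_subset_with_card_n)
  then obtain p q r where pqr: "{p, q, r} \<subseteq> nbrs V E u \<inter> I" "p \<noteq> q" "q \<noteq> r" "p \<noteq> r"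
    by (metis card_3_iff)
  then have "E u p" "E u q" "E u r" "p \<in> V" "q \<in> V" "r \<in> V"
    using nbrs_subset[of V E u] mem_nbrs_iff[OF g, of _ u] by auto
  moreover have "\<not> E p q" "\<not> E p r" "\<not> E q r"
    using pqr I unfolding independent_set_def by blast+
  ultimately show False
    using claw_freeD[OF cf u] pqr(2-4) by blast
qed

lemma card_independent_set_cubic_claw_free:
  assumes g: "graph V E" and c: "cubic V E" and cf: "claw_free V E"
    and I: "independent_set V E I"
  shows "5 * card I \<le> 2 * card V"
proof -
  have IV: "I \<subseteq> V"
    using independent_set_subset[OF I] .
  have fV: "finite V" and fI: "finite I"
    using graph_finite[OF g] IV finite_subset by auto
  have nbrs_I: "nbrs V E i = {u. u \<in> V - I \<and> E i u}" if "i \<in> I" for i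
    using I that unfolding independent_set_def nbrs_def by auto
  have in_I: "{i. i \<in> I \<and> E i u} = nbrs V E u \<inter> I" for u
    using IV graph_sym[OF g] unfolding nbrs_def by auto
  \<comment> \<open>count the edges between \<open>I\<close> and \<open>V - I\<close> from both ends\<close>
  have "3 * card I = (\<Sum>i\<in>I. card (nbrs V E i))"
    using c IV unfolding cubic_def by (simp add: subset_iff)
  also have "\<dots> = (\<Sum>i\<in>I. card {u. u \<in> V - I \<and> E i u})"
    using nbrs_I by simp
  also have "\<dots> = (\<Sum>u\<in>V - I. card {i. i \<in> I \<and> E i u})"
    using sum.swap_restrict[OF fI finite_Diff[OF fV], of "\<lambda>_ _. 1::nat"] by simp
  also have "\<dots> \<le> (\<Sum>u\<in>V - I. 2)"
    using card_nbrs_Int_independent_set_le_2[OF g cf I] in_I by (intro sum_mono) auto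
  also have "\<dots> = 2 * (card V - card I)"
    using IV fI by (simp add: card_Diff_subset)
  finally show ?thesis
    using card_mono[OF fV IV] by linarith
qed

section \<open>3-percolation in cubic graphs\<close>

lemma infected_cubic:
  assumes g: "graph V E" and c: "cubic V E" and v: "v \<in> infected V E 3 S"
  shows "v \<in> S \<or> nbrs V E v \<subseteq> S"
  using v
proof (induction rule: infected.induct)
  case (step v T)
  have "card (nbrs V E v) = 3"
    using step.hyps(1) c unfolding cubic_def by simp
  then have T: "T = nbrs V E v"
    using card_subset_eq[OF finite_nbrs[OF g] step.hyps(2)] card_mono[OF finite_nbrs[OF g] step.hyps(2)]
      step.hyps(4) by simp
  have "u \<in> S" if "v \<notin> S" "u \<in> nbrs V E v" for u
  proof -
    have "v \<in> nbrs V E u"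
      using that(2) step.hyps(1) g by (simp add: mem_nbrs_iff nbrs_def graph_sym)
    then show "u \<in> S"
      using step.IH that T by blast
  qed
  then show ?case by blast
qed simp

lemma percolating_cubic_iff:
  assumes g: "graph V E" and c: "cubic V E"
  shows "percolating V E 3 S \<longleftrightarrow> S \<subseteq> V \<and> independent_set V E (V - S)"
proof
  assume p: "percolating V E 3 S"
  have "\<not> E u w" if "u \<in> V - S" "w \<in> V - S" for u w
  proof
    assume "E u w"
    then have "w \<in> nbrs V E u"
      using that by (simp add: nbrs_def)
    moreover have "nbrs V E u \<subseteq> S"
      using infected_cubic[OF g c] p that unfolding percolating_def by blast
    ultimately show False
      using that by blast
  qed
  then show "S \<subseteq> V \<and> independent_set V E (V - S)"
    using p unfolding percolating_def independent_set_def by blast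
next
  assume S: "S \<subseteq> V \<and> independent_set V E (V - S)"
  have "v \<in> infected V E 3 S" if "v \<in> V" for v
  proof (cases "v \<in> S")
    case False
    then have "nbrs V E v \<subseteq> S"
      using S that unfolding independent_set_def nbrs_def by blast
    then show ?thesis
      using that c finite_nbrs[OF g] unfolding cubic_def
      by (intro infected.step[where v = v and T = "nbrs V E v"]) (auto intro: infected.init)
  qed (rule infected.init)
  then show "percolating V E 3 S"
    using S unfolding percolating_def by blast
qed

lemma min_percolating_cubic:
  assumes g: "graph V E" and c: "cubic V E"
  shows "min_percolating V E 3 = card V - independence_number V E"
proof -
  let ?P = "{S. percolating V E 3 S}"
  have fin: "finite ?P"
  proof (rule finite_subset)
    show "?P \<subseteq> Pow V"
      unfolding percolating_def by blast
  qed (simp add: graph_finite[OF g])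
  have complement: "card (V - I) = card V - card I" if "I \<subseteq> V" for I
    using that graph_finite[OF g] by (simp add: card_Diff_subset finite_subset)
  obtain I where I: "independent_set V E I" "card I = independence_number V E"
    using independence_number_attained[OF g] .
  have "V - I \<in> ?P"
    using I independent_set_subset[OF I(1)] by (simp add: percolating_cubic_iff[OF g c] double_diff)
  then have le: "min_percolating V E 3 \<le> card V - independence_number V E"
    unfolding min_percolating_def using fin complement independent_set_subset[OF I(1)] I(2)
    by (metis Min_le finite_imageI image_eqI)
  have "min_percolating V E 3 \<in> card ` ?P"
    unfolding min_percolating_def using fin \<open>V - I \<in> ?P\<close> by (intro Min_in) auto
  then obtain S where S: "S \<subseteq> V" "independent_set V E (V - S)" "card S = min_percolating V E 3"
    using percolating_cubic_iff[OF g c] by auto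
  have "card V - card S \<le> independence_number V E"
    using card_le_independence_number[OF g S(2)] complement[OF S(1)] by simp
  with le S(3) show ?thesis
    by linarith
qed

section \<open>Claw-free \<open>K\<^sub>4\<close>-free graphs of maximum degree 3\<close>

lemma card_3_obtain_third:
  assumes "card A = 3" "a \<in> A" "b \<in> A" "a \<noteq> b"
  obtains c where "A = {a, b, c}" "c \<noteq> a" "c \<noteq> b"
proof -
  have "finite A"
    using assms(1) card.infinite by fastforce
  then have "card (A - {a, b}) = 1"
    using assms by (simp add: card_Diff_subset)
  then obtain c where "A - {a, b} = {c}"
    by (meson card_1_singletonE)
  then show thesis
    using that assms(2-3) by blast
qed

lemma cubic_claw_free_triangle:
  assumes "graph V E" "claw_free V E" "v \<in> V" "card (nbrs V E v) = 3"
  obtains x y z where "nbrs V E v = {x, y, z}" "x \<noteq> y" "x \<noteq> z" "y \<noteq> z" "E x y"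
proof -
  obtain p q r where pqr: "nbrs V E v = {p, q, r}" "p \<noteq> q" "q \<noteq> r" "p \<noteq> r"
    using assms(4) card_3_iff by metis
  then have "E v p" "E v q" "E v r" "p \<in> V" "q \<in> V" "r \<in> V"
    using nbrs_subset[of V E v] mem_nbrs_iff[OF assms(1), of _ v] by auto
  then have "E p q \<or> E p r \<or> E q r"
    using claw_freeD[OF assms(2,3)] pqr by blast
  then show thesis
    using that pqr by (metis insert_commute)
qed

definition K4_free :: "('a \<Rightarrow> 'a \<Rightarrow> bool) \<Rightarrow> bool" where
  "K4_free E \<longleftrightarrow> (\<nexists>K. is_K4 K E)"

lemma K4_free_mono: "K4_free E \<Longrightarrow> (\<And>u w. E' u w \<Longrightarrow> E u w) \<Longrightarrow> K4_free E'"
  unfolding K4_free_def is_K4_def by blast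

lemma K4_freeD:
  assumes "K4_free E" "graph V E" "E a b" "E a c" "E a d" "E b c" "E b d" "E c d"
  shows False
proof -
  have "a \<noteq> b" "a \<noteq> c" "a \<noteq> d" "b \<noteq> c" "b \<noteq> d" "c \<noteq> d"
    using assms(3-) graph_irrefl[OF assms(2)] by metis+
  then have "is_K4 {a, b, c, d} E"
    using assms(3-) graph_sym[OF assms(2)] unfolding is_K4_def by auto
  then show False
    using assms(1) unfolding K4_free_def by blast
qed

lemma connected_cubic_K4_free:
  assumes g: "graph V E" and conn: "connected_graph V E" and c: "cubic V E"
    and not_K4: "\<not> is_K4 V E"
  shows "K4_free E"
  unfolding K4_free_def
proof
  assume "\<exists>K. is_K4 K E"
  then obtain K where K: "card K = 4" "\<And>u w. u \<in> K \<Longrightarrow> w \<in> K \<Longrightarrow> u \<noteq> w \<Longrightarrow> E u w"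
    unfolding is_K4_def by blast
  have KV: "K \<subseteq> V"
  proof
    fix u assume "u \<in> K"
    moreover have "\<not> K \<subseteq> {u}"
      using K(1) by (auto dest!: subset_singletonD)
    ultimately show "u \<in> V"
      using K(2) graph_edge_in[OF g] by blast
  qed
  \<comment> \<open>a \<open>K\<^sub>4\<close> in a cubic graph is a whole connected component\<close>
  have closed: "nbrs V E u \<subseteq> K" if "u \<in> K" for u
  proof -
    have "K - {u} \<subseteq> nbrs V E u"
      using K(2) that KV by (auto simp: nbrs_def)
    moreover have "card (K - {u}) = card (nbrs V E u)"
      using K(1) that c KV unfolding cubic_def by auto
    ultimately have "K - {u} = nbrs V E u"
      using card_subset_eq[OF finite_nbrs[OF g]] by metis
    then show ?thesis
      by blast
  qed
  have reach: "w \<in> K" if "E\<^sup>*\<^sup>* u w" "u \<in> K" for u w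
    using that
  proof (induction rule: rtranclp_induct)
    case (step w w')
    then show ?case
      using closed mem_nbrs_iff[OF g] by blast
  qed
  obtain a where "a \<in> K"
    using K(1) by fastforce
  then have "V = K"
    using conn reach KV unfolding connected_graph_def by blast
  then show False
    using K not_K4 unfolding is_K4_def by blast
qed

definition induced :: "'a set \<Rightarrow> ('a \<Rightarrow> 'a \<Rightarrow> bool) \<Rightarrow> 'a \<Rightarrow> 'a \<Rightarrow> bool" where
  "induced W E u w \<longleftrightarrow> u \<in> W \<and> w \<in> W \<and> E u w"

lemma graph_induced: "graph V E \<Longrightarrow> W \<subseteq> V \<Longrightarrow> graph W (induced W E)"
  unfolding graph_def induced_def by (auto intro: finite_subset)

lemma nbrs_induced: "u \<in> W \<Longrightarrow> W \<subseteq> V \<Longrightarrow> nbrs W (induced W E) u = nbrs V E u \<inter> W"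
  unfolding nbrs_def induced_def by auto

lemma claw_free_induced: "claw_free V E \<Longrightarrow> W \<subseteq> V \<Longrightarrow> claw_free W (induced W E)"
  unfolding claw_free_def induced_def by blast

definition add_edge :: "'a \<Rightarrow> 'a \<Rightarrow> ('a \<Rightarrow> 'a \<Rightarrow> bool) \<Rightarrow> 'a \<Rightarrow> 'a \<Rightarrow> bool" where
  "add_edge a b E u w \<longleftrightarrow> E u w \<or> (u = a \<and> w = b) \<or> (u = b \<and> w = a)"

lemma add_edge_commute: "add_edge a b E = add_edge b a E"
  unfolding add_edge_def by (intro ext) blast

lemma graph_add_edge: "graph W E \<Longrightarrow> a \<in> W \<Longrightarrow> b \<in> W \<Longrightarrow> a \<noteq> b \<Longrightarrow> graph W (add_edge a b E)"
  unfolding graph_def add_edge_def by blast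

lemma nbrs_add_edge_endpoint: "nbrs W (add_edge a b E) a \<subseteq> insert b (nbrs W E a)"
  unfolding nbrs_def add_edge_def by auto

lemma nbrs_add_edge_other: "u \<noteq> a \<Longrightarrow> u \<noteq> b \<Longrightarrow> nbrs W (add_edge a b E) u = nbrs W E u"
  unfolding nbrs_def add_edge_def by auto

lemma claw_free_add_edge:
  assumes cf: "claw_free W E" and "a \<noteq> b"
    and a_clique: "\<And>p q. E a p \<Longrightarrow> E a q \<Longrightarrow> p \<noteq> q \<Longrightarrow> E p q"
    and b_clique: "\<And>p q. E b p \<Longrightarrow> E b q \<Longrightarrow> p \<noteq> q \<Longrightarrow> E p q"
  shows "claw_free W (add_edge a b E)"
proof -
  have False if c: "c \<in> W" and leaves: "x \<in> W" "y \<in> W" "z \<in> W"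
    and e: "add_edge a b E c x" "add_edge a b E c y" "add_edge a b E c z"
    and d: "x \<noteq> y" "x \<noteq> z" "y \<noteq> z"
    and n: "\<not> add_edge a b E x y" "\<not> add_edge a b E x z" "\<not> add_edge a b E y z" for c x y z
  proof -
    consider "c \<noteq> a" "c \<noteq> b" | "c = a" | "c = b"
      by blast
    then show False
    proof cases
      case 1
      then show False
        using cf c leaves e d n unfolding claw_free_def add_edge_def by blast
    next
      case 2
      \<comment> \<open>two of the three leaves differ from \<open>b\<close>, so they are adjacent\<close>
      then show False
        using e d n a_clique \<open>a \<noteq> b\<close> unfolding add_edge_def by blast
    next
      case 3
      then show False
        using e d n b_clique \<open>a \<noteq> b\<close> unfolding add_edge_def by blast
    qed
  qed
  then show ?thesis
    unfolding claw_free_def by blast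
qed

lemma K4_free_add_edge:
  assumes K4: "K4_free E" and "a \<noteq> b"
    and no_common: "\<And>c d. E a c \<Longrightarrow> E a d \<Longrightarrow> E b c \<Longrightarrow> E b d \<Longrightarrow> \<not> E c d"
  shows "K4_free (add_edge a b E)"
  unfolding K4_free_def
proof
  assume "\<exists>K. is_K4 K (add_edge a b E)"
  then obtain K where K: "card K = 4"
    "\<And>u w. u \<in> K \<Longrightarrow> w \<in> K \<Longrightarrow> u \<noteq> w \<Longrightarrow> add_edge a b E u w"
    unfolding is_K4_def by blast
  show False
  proof (cases "a \<in> K \<and> b \<in> K")
    case False
    then have "is_K4 K E"
      using K unfolding is_K4_def add_edge_def by blast
    then show False
      using K4 unfolding K4_free_def by blast
  next
    case True
    then have "card (K - {a, b}) = 2"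
      using K(1) \<open>a \<noteq> b\<close> by (simp add: card_Diff_subset card.infinite)
    then obtain c d where "K - {a, b} = {c, d}" "c \<noteq> d"
      by (meson card_2_iff)
    then have "E a c" "E a d" "E b c" "E b d" "E c d"
      using K(2) True \<open>a \<noteq> b\<close> unfolding add_edge_def by (metis Diff_iff insertCI)+
    then show False
      using no_common by blast
  qed
qed

lemma third_independent_set_extend:
  assumes g: "graph V E" and W: "W \<subseteq> V"
    and I': "independent_set W E' I'" "card W \<le> 3 * card I'"
    and sub: "\<And>u w. u \<in> W \<Longrightarrow> w \<in> W \<Longrightarrow> E u w \<Longrightarrow> E' u w"
    and J: "independent_set V E J" "J \<inter> W = {}" "card (V - W) \<le> 3 * card J"
    and no_edge: "\<And>j u. j \<in> J \<Longrightarrow> u \<in> I' \<Longrightarrow> \<not> E j u"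
  shows "\<exists>I. independent_set V E I \<and> card V \<le> 3 * card I"
proof (intro exI conjI)
  have I'W: "I' \<subseteq> W"
    using independent_set_subset[OF I'(1)] .
  show "independent_set V E (J \<union> I')"
    using I'(1) I'W W J(1) sub no_edge graph_sym[OF g]
    unfolding independent_set_def by blast
  have fin: "finite V"
    using graph_finite[OF g] .
  have "card (J \<union> I') = card J + card I'"
    using I'W W J(2) independent_set_subset[OF J(1)] fin
    by (intro card_Un_disjoint) (auto dest: finite_subset)
  moreover have "card V = card W + card (V - W)"
    using card_mono[OF fin W] fin W by (simp add: card_Diff_subset finite_subset)
  ultimately show "card V \<le> 3 * card (J \<union> I')"
    using I'(2) J(3) by simp
qed

locale subcubic_claw_free_K4_free =
  fixes V :: "'a set" and E :: "'a \<Rightarrow> 'a \<Rightarrow> bool"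
  assumes graph: "graph V E" and claw_free: "claw_free V E" and K4_free: "K4_free E"
    and degree_le_3: "v \<in> V \<Longrightarrow> card (nbrs V E v) \<le> 3"
begin

lemma sym: "E u v \<Longrightarrow> E v u"
  using graph_sym[OF graph] .

lemma irrefl: "\<not> E v v"
  using graph_irrefl[OF graph] .

lemma edge_in: "E u v \<Longrightarrow> u \<in> V" "E u v \<Longrightarrow> v \<in> V"
  using graph_edge_in[OF graph] by blast+

lemma mem_nbrs: "u \<in> nbrs V E v \<longleftrightarrow> E v u"
  using mem_nbrs_iff[OF graph] .

lemma no_K4: "E a b \<Longrightarrow> E a c \<Longrightarrow> E a d \<Longrightarrow> E b c \<Longrightarrow> E b d \<Longrightarrow> E c d \<Longrightarrow> False"
  using K4_freeD[OF K4_free graph] .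

lemma induced_subgraph:
  assumes W: "W \<subseteq> V"
  shows "subcubic_claw_free_K4_free W (induced W E)"
proof unfold_locales
  show "graph W (induced W E)"
    using graph_induced[OF graph W] .
  show "claw_free W (induced W E)"
    using claw_free_induced[OF claw_free W] .
  show "K4_free (induced W E)"
    by (rule K4_free_mono[OF K4_free]) (simp add: induced_def)
  fix v assume v: "v \<in> W"
  have "card (nbrs V E v \<inter> W) \<le> card (nbrs V E v)"
    using finite_nbrs[OF graph] by (intro card_mono) auto
  then show "card (nbrs W (induced W E) v) \<le> 3"
    using nbrs_induced[OF v W] degree_le_3 v W by fastforce
qed

lemma delete_and_join:
  assumes W: "W \<subseteq> V" and ab: "a \<in> W" "b \<in> W" "a \<noteq> b"
    and lost: "a' \<in> V - W" "E a a'" "b' \<in> V - W" "E b b'"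
    and a_clique: "\<And>p q. p \<in> W \<Longrightarrow> q \<in> W \<Longrightarrow> p \<noteq> q \<Longrightarrow> E a p \<Longrightarrow> E a q \<Longrightarrow> E p q"
    and b_clique: "\<And>p q. p \<in> W \<Longrightarrow> q \<in> W \<Longrightarrow> p \<noteq> q \<Longrightarrow> E b p \<Longrightarrow> E b q \<Longrightarrow> E p q"
    and no_common: "\<And>c d. E a c \<Longrightarrow> E a d \<Longrightarrow> E b c \<Longrightarrow> E b d \<Longrightarrow> \<not> E c d"
  shows "subcubic_claw_free_K4_free W (add_edge a b (induced W E))"
proof unfold_locales
  show "graph W (add_edge a b (induced W E))"
    using graph_add_edge[OF graph_induced[OF graph W] ab] .
  show "claw_free W (add_edge a b (induced W E))"
    using claw_free_add_edge[OF claw_free_induced[OF claw_free W] \<open>a \<noteq> b\<close>] a_clique b_clique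
    unfolding induced_def by blast
  show "K4_free (add_edge a b (induced W E))"
  proof (rule K4_free_add_edge[OF _ \<open>a \<noteq> b\<close>])
    show "K4_free (induced W E)"
      by (rule K4_free_mono[OF K4_free]) (simp add: induced_def)
  qed (use no_common in \<open>auto simp: induced_def\<close>)
  have joined: "card (nbrs W (add_edge u w (induced W E)) u) \<le> 3"
    if "u \<in> W" "u' \<in> V - W" "E u u'" for u w u'
  proof -
    have "nbrs V E u \<inter> W \<subseteq> nbrs V E u - {u'}"
      using that(2) by blast
    moreover have "card (nbrs V E u - {u'}) \<le> 2"
      using degree_le_3[of u] that W mem_nbrs finite_nbrs[OF graph] by auto
    ultimately have "card (nbrs V E u \<inter> W) \<le> 2"
      by (meson card_mono finite_Diff finite_nbrs[OF graph] le_trans)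
    then have "card (insert w (nbrs W (induced W E) u)) \<le> 3"
      using nbrs_induced[OF that(1) W] finite_nbrs[OF graph] by (simp add: card_insert_le_m1)
    then show ?thesis
      using nbrs_add_edge_endpoint card_mono finite_nbrs[OF graph_induced[OF graph W]]
      by (metis finite_insert le_trans)
  qed
  fix v assume v: "v \<in> W"
  consider "v = a" | "v = b" | "v \<noteq> a" "v \<noteq> b"
    by blast
  then show "card (nbrs W (add_edge a b (induced W E)) v) \<le> 3"
  proof cases
    case 3
    have "card (nbrs V E v \<inter> W) \<le> card (nbrs V E v)"
      using finite_nbrs[OF graph] by (intro card_mono) auto
    moreover have "nbrs W (add_edge a b (induced W E)) v = nbrs V E v \<inter> W"
      using nbrs_add_edge_other[OF 3] nbrs_induced[OF v W] by simp
    ultimately show ?thesis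
      using degree_le_3[of v] v W by auto
  qed (use joined ab lost add_edge_commute in metis)+
qed

context
  assumes cubic: "\<And>u. u \<in> V \<Longrightarrow> card (nbrs V E u) = 3"
    and common_nbrs_adjacent:
      "\<And>a d b c. E a b \<Longrightarrow> E a c \<Longrightarrow> E d b \<Longrightarrow> E d c \<Longrightarrow> a \<noteq> d \<Longrightarrow> b \<noteq> c \<Longrightarrow> E a d"
begin

lemma triangle_with_exits:
  assumes "v \<in> V"
  obtains x y v' x' where "nbrs V E v = {x, y, v'}" "nbrs V E x = {v, y, x'}" "E x y"
    "v' \<notin> {v, x, y}" "x' \<notin> {v, x, y}" "v' \<noteq> x'"
proof -
  obtain x y v' where Nv: "nbrs V E v = {x, y, v'}" "x \<noteq> y" "x \<noteq> v'" "y \<noteq> v'" and "E x y"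
    using cubic_claw_free_triangle[OF graph claw_free assms cubic[OF assms]] by blast
  have "E v x" "E v y" "E v v'"
    using Nv(1) mem_nbrs by blast+
  then obtain x' where Nx: "nbrs V E x = {v, y, x'}" "x' \<noteq> v" "x' \<noteq> y"
    using card_3_obtain_third[OF cubic[OF edge_in(2)]] \<open>E x y\<close> sym mem_nbrs irrefl by metis
  have "E x x'"
    using Nx(1) mem_nbrs by blast
  have "v' \<noteq> x'"
  proof
    assume "v' = x'"
    \<comment> \<open>then \<open>v\<close> and \<open>x\<close> are common neighbours of \<open>y\<close> and \<open>v'\<close>\<close>
    then have "E y v'"
      using common_nbrs_adjacent[of y v x v'] \<open>E v x\<close> \<open>E v y\<close> \<open>E v v'\<close> \<open>E x y\<close> \<open>E x x'\<close>
        Nv(4) sym irrefl by metis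
    then show False
      using no_K4 \<open>E v x\<close> \<open>E v y\<close> \<open>E v v'\<close> \<open>E x y\<close> \<open>E x x'\<close> \<open>v' = x'\<close> by blast
  qed
  moreover have "v' \<notin> {v, x, y}" "x' \<notin> {v, x, y}"
    using Nv Nx \<open>E v v'\<close> \<open>E x x'\<close> irrefl by blast+
  ultimately show thesis
    using that Nv(1) Nx(1) \<open>E x y\<close> by blast
qed

lemma triangle_delete_and_join:
  assumes Nv: "nbrs V E v = {x, y, v'}" and Nx: "nbrs V E x = {v, y, x'}"
    and exits: "v' \<notin> {v, x, y}" "x' \<notin> {v, x, y}" "v' \<noteq> x'"
  defines "W \<equiv> V - {v, x, y}"
  shows "subcubic_claw_free_K4_free W (add_edge v' x' (induced W E))"
proof -
  have "E v v'" "E x x'"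
    using Nv Nx mem_nbrs by blast+
  then have W: "W \<subseteq> V" "v' \<in> W" "x' \<in> W" "v \<in> V - W" "x \<in> V - W"
    using exits edge_in unfolding W_def by blast+
  have nbr_v: "p = v'" if "E v p" "p \<in> W" for p
    using that Nv mem_nbrs unfolding W_def by blast
  have nbr_x: "p = x'" if "E x p" "p \<in> W" for p
    using that Nx mem_nbrs unfolding W_def by blast
  \<comment> \<open>otherwise \<open>w\<close> would be the centre of a claw with leaves \<open>u, p, q\<close>\<close>
  have clique: "E p q"
    if "E w u" "u \<notin> W" "\<And>r. E u r \<Longrightarrow> r \<in> W \<Longrightarrow> r = w" "w \<in> W"
      "p \<in> W" "q \<in> W" "p \<noteq> q" "E w p" "E w q" for w u p q
    using claw_freeD[OF claw_free, of w u p q] that edge_in irrefl by metis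
  show ?thesis
  proof (rule delete_and_join[OF W(1-3) exits(3) W(4) _ W(5)])
    show "E v' v" "E x' x"
      using \<open>E v v'\<close> \<open>E x x'\<close> sym by blast+
    show "E p q" if "p \<in> W" "q \<in> W" "p \<noteq> q" "E v' p" "E v' q" for p q
      using clique[of v' v p q] that nbr_v W \<open>E v v'\<close> sym by blast
    show "E p q" if "p \<in> W" "q \<in> W" "p \<noteq> q" "E x' p" "E x' q" for p q
      using clique[of x' x p q] that nbr_x W \<open>E x x'\<close> sym by blast
    show "\<not> E c d" if "E v' c" "E v' d" "E x' c" "E x' d" for c d
    proof
      assume "E c d"
      then have "E v' x'"
        using common_nbrs_adjacent that exits(3) irrefl by metis
      then show False
        using no_K4 that \<open>E c d\<close> by blast
    qed
  qed
qed

end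

context
  assumes smaller: "\<And>(W :: 'a set) E'. card W < card V \<Longrightarrow> subcubic_claw_free_K4_free W E' \<Longrightarrow>
    \<exists>I. independent_set W E' I \<and> card W \<le> 3 * card I"
begin

lemma closed_nbhd_reduction:
  assumes J: "independent_set V E J" "J \<noteq> {}"
    and closed_nbhd: "card (J \<union> (\<Union>u\<in>J. nbrs V E u)) \<le> 3 * card J"
  shows "\<exists>I. independent_set V E I \<and> card V \<le> 3 * card I"
proof -
  define W where "W = V - (J \<union> (\<Union>u\<in>J. nbrs V E u))"
  have JV: "J \<subseteq> V"
    using independent_set_subset[OF J(1)] .
  have "W \<subset> V"
    unfolding W_def using J(2) JV by blast
  then obtain I' where I': "independent_set W (induced W E) I'" "card W \<le> 3 * card I'"
    using smaller[OF psubset_card_mono[OF graph_finite[OF graph] \<open>W \<subset> V\<close>]]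
      induced_subgraph by blast
  show ?thesis
  proof (rule third_independent_set_extend[OF graph _ I' _ J(1)])
    show "W \<subseteq> V" "J \<inter> W = {}"
      unfolding W_def by blast+
    have "V - W = J \<union> (\<Union>u\<in>J. nbrs V E u)"
      unfolding W_def nbrs_def using JV by blast
    then show "card (V - W) \<le> 3 * card J"
      using closed_nbhd by simp
    show "\<not> E j u" if "j \<in> J" "u \<in> I'" for j u
      using that independent_set_subset[OF I'(1)] mem_nbrs unfolding W_def by blast
  qed (simp add: induced_def)
qed

lemma low_degree_reduction:
  assumes "v \<in> V" "card (nbrs V E v) \<le> 2"
  shows "\<exists>I. independent_set V E I \<and> card V \<le> 3 * card I"
proof (rule closed_nbhd_reduction)
  show "independent_set V E {v}"
    using assms irrefl unfolding independent_set_def by blast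
  show "card ({v} \<union> (\<Union>u\<in>{v}. nbrs V E u)) \<le> 3 * card {v}"
    using assms(2) finite_nbrs[OF graph] by (simp add: card_insert_if)
qed simp

lemma nonadjacent_pair_reduction:
  assumes "E a b" "E a c" "E d b" "E d c" "a \<noteq> d" "b \<noteq> c" "\<not> E a d"
  shows "\<exists>I. independent_set V E I \<and> card V \<le> 3 * card I"
proof (rule closed_nbhd_reduction)
  show "independent_set V E {a, d}"
    using assms edge_in irrefl sym unfolding independent_set_def by blast
  have fin: "finite (nbrs V E a)" "finite (nbrs V E d)"
    using finite_nbrs[OF graph] by blast+
  have "{b, c} \<subseteq> nbrs V E a \<inter> nbrs V E d"
    using assms mem_nbrs by blast
  then have "2 \<le> card (nbrs V E a \<inter> nbrs V E d)"
    using card_mono[of _ "{b, c}"] fin assms(6) by (metis card_2_iff finite_Int)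
  moreover have "card (nbrs V E a) \<le> 3" "card (nbrs V E d) \<le> 3"
    using degree_le_3 edge_in assms by blast+
  ultimately have "card (nbrs V E a \<union> nbrs V E d) \<le> 4"
    using card_Un_Int[OF fin] by linarith
  moreover have "card ({a, d} \<union> (nbrs V E a \<union> nbrs V E d))
      \<le> card {a, d} + card (nbrs V E a \<union> nbrs V E d)"
    by (rule card_Un_le)
  ultimately show "card ({a, d} \<union> (\<Union>u\<in>{a, d}. nbrs V E u)) \<le> 3 * card {a, d}"
    using assms(5) by (simp add: Un_assoc)
qed simp

lemma triangle_reduction:
  assumes "V \<noteq> {}" and cubic: "\<And>u. u \<in> V \<Longrightarrow> card (nbrs V E u) = 3"
    and common_nbrs_adjacent:
      "\<And>a d b c. E a b \<Longrightarrow> E a c \<Longrightarrow> E d b \<Longrightarrow> E d c \<Longrightarrow> a \<noteq> d \<Longrightarrow> b \<noteq> c \<Longrightarrow> E a d"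
  shows "\<exists>I. independent_set V E I \<and> card V \<le> 3 * card I"
proof -
  obtain v where v: "v \<in> V"
    using assms(1) by blast
  obtain x y v' x' where Nv: "nbrs V E v = {x, y, v'}" and Nx: "nbrs V E x = {v, y, x'}"
    and "E x y" and exits: "v' \<notin> {v, x, y}" "x' \<notin> {v, x, y}" "v' \<noteq> x'"
    by (rule triangle_with_exits[OF cubic common_nbrs_adjacent v])
  define W where "W = V - {v, x, y}"
  have "W \<subset> V"
    using v unfolding W_def by blast
  have "subcubic_claw_free_K4_free W (add_edge v' x' (induced W E))"
    unfolding W_def by (rule triangle_delete_and_join[OF cubic common_nbrs_adjacent Nv Nx exits])
  then obtain I' where I': "independent_set W (add_edge v' x' (induced W E)) I'" "card W \<le> 3 * card I'"
    using smaller[OF psubset_card_mono[OF graph_finite[OF graph] \<open>W \<subset> V\<close>]] by blast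
  \<comment> \<open>the new edge keeps \<open>v'\<close> and \<open>x'\<close> from both lying in \<open>I'\<close>, so \<open>v\<close> or \<open>x\<close> extends it\<close>
  obtain w where w: "w \<in> {v, x}" "\<And>u. u \<in> I' \<Longrightarrow> \<not> E w u"
  proof -
    have "\<not> (v' \<in> I' \<and> x' \<in> I')"
      using I'(1) unfolding independent_set_def add_edge_def by blast
    then show thesis
      using that[of v] that[of x] Nv Nx independent_set_subset[OF I'(1)] mem_nbrs
      unfolding W_def by blast
  qed
  have "E v x" "E v y"
    using Nv mem_nbrs by blast+
  show ?thesis
  proof (rule third_independent_set_extend[OF graph _ I'])
    show "W \<subseteq> V" "{w} \<inter> W = {}"
      using w(1) \<open>W \<subset> V\<close> unfolding W_def by blast+
    show "independent_set V E {w}"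
      using w(1) v edge_in \<open>E v x\<close> irrefl unfolding independent_set_def by blast
    have "card {v, x, y} = 3"
      using \<open>E v x\<close> \<open>E v y\<close> \<open>E x y\<close> irrefl by (metis card_3_iff)
    then show "card (V - W) \<le> 3 * card {w}"
      using v \<open>E v x\<close> \<open>E v y\<close> edge_in unfolding W_def by (simp add: Diff_Diff_Int Int_absorb1)
  qed (use w(2) in \<open>auto simp: add_edge_def induced_def\<close>)
qed

end

end

lemma subcubic_claw_free_K4_free_independent_third:
  assumes "subcubic_claw_free_K4_free V E"
  shows "\<exists>I. independent_set V E I \<and> card V \<le> 3 * card I"
  using assms
proof (induction "card V" arbitrary: V E rule: less_induct)
  case less
  interpret subcubic_claw_free_K4_free V E
    by (fact less.prems)
  have smaller: "\<exists>I. independent_set W E' I \<and> card W \<le> 3 * card I"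
    if "card W < card V" "subcubic_claw_free_K4_free W E'" for W :: "'a set" and E'
    using less.hyps that by blast
  consider (empty) "V = {}"
    | (low_degree) v where "v \<in> V" "card (nbrs V E v) \<le> 2"
    | (nonadjacent_pair) a d b c where "E a b" "E a c" "E d b" "E d c" "a \<noteq> d" "b \<noteq> c" "\<not> E a d"
    | (triangle) "V \<noteq> {}" "\<And>u. u \<in> V \<Longrightarrow> card (nbrs V E u) = 3"
        "\<And>a d b c. E a b \<Longrightarrow> E a c \<Longrightarrow> E d b \<Longrightarrow> E d c \<Longrightarrow> a \<noteq> d \<Longrightarrow> b \<noteq> c \<Longrightarrow> E a d"
  proof (cases "V = {} \<or> (\<exists>v\<in>V. card (nbrs V E v) \<le> 2)")
    case False
    have cubic: "card (nbrs V E u) = 3" if "u \<in> V" for u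
      using degree_le_3[OF that] False that by fastforce
    show thesis
    proof (cases "\<exists>a d b c. E a b \<and> E a c \<and> E d b \<and> E d c \<and> a \<noteq> d \<and> b \<noteq> c \<and> \<not> E a d")
      case True
      then show thesis
        using that(3) by blast
    next
      case no_pair: False
      show thesis
        using that(4)[OF _ cubic] False no_pair by blast
    qed
  qed (use that(1,2) in blast)
  then show ?case
  proof cases
    case empty
    then show ?thesis
      by (auto simp: independent_set_def)
  next
    case low_degree
    then show ?thesis
      using low_degree_reduction[OF smaller] by blast
  next
    case nonadjacent_pair
    then show ?thesis
      using nonadjacent_pair_reduction[OF smaller] by blast
  next
    case triangle
    then show ?thesis
      using triangle_reduction[OF smaller] by blast
  qed
qed

theorem theorem3p7:
  fixes V :: "'a set" and E :: "'a \<Rightarrow> 'a \<Rightarrow> bool"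
  assumes "graph V E" and "connected_graph V E" and "claw_free V E" and "cubic V E"
    and "\<not> is_K4 V E"
  shows "real (card V) / 3 \<le> real (independence_number V E)
       \<and> real (independence_number V E) \<le> 2 * real (card V) / 5
       \<and> 3 * real (card V) / 5 \<le> real (min_percolating V E 3)
       \<and> real (min_percolating V E 3) \<le> 2 * real (card V) / 3"
proof -
  have "subcubic_claw_free_K4_free V E"
    using assms connected_cubic_K4_free unfolding cubic_def
    by unfold_locales auto
  then obtain I where I: "independent_set V E I" "card V \<le> 3 * card I"
    using subcubic_claw_free_K4_free_independent_third by blast
  then have lower: "card V \<le> 3 * independence_number V E"
    using card_le_independence_number[OF assms(1)] by fastforce
  obtain J where "independent_set V E J" "card J = independence_number V E"
    using independence_number_attained[OF assms(1)] .
  then have upper: "5 * independence_number V E \<le> 2 * card V"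
    using card_independent_set_cubic_claw_free[OF assms(1,4,3)] by metis
  have "min_percolating V E 3 = card V - independence_number V E"
    using min_percolating_cubic[OF assms(1,4)] .
  with lower upper show ?thesis
    by (simp add: of_nat_diff)
qed

end
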